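(* Let $n\ge2$, $v\in S^{n-1}$, $x_0,y_0\in\mathbb R^n$ and $\alpha,\beta\in\mathbb R$. For $t\in\mathbb R$ let $L_t=\mathrm{conv}_c(\{x_0+t\alpha v,\ y_0+t\beta v\})$. Then $f(t)=\mathrm{Vol}_n(L_t)\in[0,\infty]$ is a convex function of $t\in\mathbb R$.
   Context: For $x\in\mathbb R^n$, $B(x,1)$ is the closed Euclidean unit ball centered at $x$. For $A\subseteq\mathbb R^n$, $A^c=\bigcap_{x\in A}B(x,1)$ (with $\emptyset^c=\mathbb R^n$) and $\mathrm{conv}_c(A)=A^{cc}$; if $A$ is contained in no closed unit ball, $\mathrm{conv}_c(A)=\mathbb R^n$ and has infinite volume. *)

theory Defs
  imports "HOL-Analysis.Analysis"
begin

text \<open>Spherical dual: intersection of closed unit balls centred at points of A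
  (equals UNIV for A empty).\<close>
definition c_dual :: "'a::metric_space set \<Rightarrow> 'a set" where
  "c_dual A = (\<Inter>x\<in>A. cball x 1)"

definition conv_c :: "'a::metric_space set \<Rightarrow> 'a set" where
  "conv_c A = c_dual (c_dual A)"

end

theory Submission
  imports Defs
begin

(* For |a - b| = d \<le> 2 the ball hull conv_c {a, b} is a spindle: the solid of revolution
   about the line ab whose cross-section at signed distance y from the midpoint is an
   (n-1)-ball of radius sqrt (1 - y^2) - sqrt (1 - d^2/4); for d > 2 it is all of R^n.
   Rotating the axis onto a coordinate axis, Fubini writes its volume as the integral of
   these cross-sectional volumes.  As a function of D = d^2 each of them is convex and
   nondecreasing, because D \<mapsto> - sqrt (1 - D/4) is, and so is x \<mapsto> (max 0 x)^(n-1).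
   Finally D(t) = |(y0 - x0) + t (\<beta> - \<alpha>) v|^2 is a convex function of t. *)

section \<open>Rotation invariance of Lebesgue measure\<close>

lemma prod_Basis_cart: "(\<Prod>b\<in>Basis. x \<bullet> b) = (\<Prod>i\<in>UNIV. x $ i)" for x :: "real^'n"
  by (simp add: Basis_vec_def cart_eq_inner_axis axis_eq_axis prod.UNION_disjoint)

lemma emeasure_lborel_box_cart:
  "emeasure lborel (box l (u::real^'n)) =
     (if \<forall>i. l $ i \<le> u $ i then ennreal (\<Prod>i\<in>UNIV. u $ i - l $ i) else 0)"
proof -
  have "(\<forall>b\<in>Basis. l \<bullet> b \<le> u \<bullet> b) \<longleftrightarrow> (\<forall>i. l $ i \<le> u $ i)"
    by (auto simp: Basis_vec_def cart_eq_inner_axis)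
  then show ?thesis
    by (simp add: emeasure_lborel_box_eq prod_Basis_cart)
qed

lemma borel_measurable_linear [measurable (raw)]:
  fixes f :: "'a::euclidean_space \<Rightarrow> 'b::euclidean_space"
  shows "linear f \<Longrightarrow> f \<in> borel_measurable borel"
  by (intro borel_measurable_continuous_onI linear_continuous_on, simp add: linear_conv_bounded_linear)

(* The change-of-variables results of HOL-Analysis, such as measure_orthogonal_image,
   require a wellordered index type; a wellordered copy of the index type transfers
   rotation invariance of Lebesgue measure to real^'n for every finite 'n. *)
typedef 'a wellordered = "UNIV :: 'a set" by simp

instantiation wellordered :: (countable) linorder
begin
definition less_eq_wellordered :: "'a wellordered \<Rightarrow> 'a wellordered \<Rightarrow> bool" where
  "x \<le> y \<longleftrightarrow> to_nat (Rep_wellordered x) \<le> to_nat (Rep_wellordered y)"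
definition less_wellordered :: "'a wellordered \<Rightarrow> 'a wellordered \<Rightarrow> bool" where
  "x < y \<longleftrightarrow> to_nat (Rep_wellordered x) < to_nat (Rep_wellordered y)"
instance
proof
  fix x y :: "'a wellordered"
  assume "x \<le> y" "y \<le> x"
  then show "x = y"
    by (metis Rep_wellordered_inject inj_to_nat injD less_eq_wellordered_def order_antisym)
qed (auto simp: less_eq_wellordered_def less_wellordered_def)
end

instance wellordered :: (countable) wellorder
proof
  fix P :: "'a wellordered \<Rightarrow> bool" and a
  assume step: "\<And>x. (\<And>y. y < x \<Longrightarrow> P y) \<Longrightarrow> P x"
  show "P a"
    by (induction a rule: measure_induct_rule[of "\<lambda>x. to_nat (Rep_wellordered x)"])
      (rule step, simp add: less_wellordered_def)
qed

instance wellordered :: (finite) finite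
proof
  have "(UNIV :: 'a wellordered set) = Abs_wellordered ` UNIV"
    by (metis Rep_wellordered_inverse surj_def)
  moreover have "finite (Abs_wellordered ` (UNIV :: 'a set))"
    by (rule finite_imageI) simp
  ultimately show "finite (UNIV :: 'a wellordered set)"
    by simp
qed

definition relabel :: "real^'n \<Rightarrow> real^'n wellordered" where
  "relabel z = (\<chi> i. z $ Rep_wellordered i)"

definition unlabel :: "real^'n wellordered \<Rightarrow> real^'n" where
  "unlabel w = (\<chi> j. w $ Abs_wellordered j)"

lemma unlabel_relabel [simp]: "unlabel (relabel z) = z"
  by (simp add: unlabel_def relabel_def Abs_wellordered_inverse vec_eq_iff)

lemma relabel_unlabel [simp]: "relabel (unlabel w) = w"
  by (simp add: unlabel_def relabel_def Rep_wellordered_inverse vec_eq_iff)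

lemma linear_relabel: "linear relabel"
  by (auto simp: linear_iff relabel_def vec_eq_iff)

lemma linear_unlabel: "linear unlabel"
  by (auto simp: linear_iff unlabel_def vec_eq_iff)

lemma bij_Rep_wellordered: "bij Rep_wellordered"
  by (metis Rep_wellordered_inverse Abs_wellordered_inverse UNIV_I bij_betw_byWitness subset_UNIV)

lemma all_Rep_wellordered: "(\<forall>i. P (Rep_wellordered i)) \<longleftrightarrow> (\<forall>j. P j)"
  by (metis Abs_wellordered_inverse UNIV_I)

lemma prod_Rep_wellordered: "(\<Prod>i\<in>UNIV. g (Rep_wellordered i)) = (\<Prod>j\<in>UNIV. g j)"
  using prod.reindex_bij_betw[OF bij_Rep_wellordered] by simp

lemma inner_relabel [simp]: "relabel x \<bullet> relabel y = x \<bullet> y"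
  unfolding inner_vec_def relabel_def
  using sum.reindex_bij_betw[OF bij_Rep_wellordered, of "\<lambda>j. x $ j * y $ j"] by simp

lemma inner_unlabel [simp]: "unlabel x \<bullet> unlabel y = x \<bullet> y"
  by (metis inner_relabel relabel_unlabel)

lemma lborel_distr_unlabel: "distr lborel borel unlabel = (lborel :: (real^'n) measure)"
proof (rule lborel_eqI[symmetric])
  fix l u :: "real^'n"
  assume "\<And>b. b \<in> Basis \<Longrightarrow> l \<bullet> b \<le> u \<bullet> b"
  then have le: "\<forall>i. l $ i \<le> u $ i"
    by (auto simp: Basis_vec_def cart_eq_inner_axis)
  have "unlabel -` box l u = box (relabel l) (relabel u)"
  proof -
    have "relabel y \<in> box (relabel l) (relabel u) \<longleftrightarrow> y \<in> box l u" for y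
      by (simp add: mem_box_cart relabel_def all_Rep_wellordered[of "\<lambda>j. l $ j < y $ j \<and> y $ j < u $ j"])
    then show ?thesis
      by (metis relabel_unlabel unlabel_relabel vimage_eq subset_antisym subsetI)
  qed
  then have "emeasure (distr lborel borel unlabel) (box l u) =
      ennreal (\<Prod>i\<in>UNIV. u $ Rep_wellordered i - l $ Rep_wellordered i)"
    using le by (simp add: emeasure_distr linear_unlabel emeasure_lborel_box_cart relabel_def)
  then show "emeasure (distr lborel borel unlabel) (box l u) = (\<Prod>b\<in>Basis. (u - l) \<bullet> b)"
    using le prod_Rep_wellordered[of "\<lambda>j. u $ j - l $ j"]
    by (simp add: prod_Basis_cart)
qed simp

lemma lborel_distr_orthogonal_transformation_wellorder:
  fixes g :: "real^'m::{finite,wellorder} \<Rightarrow> real^'m::_"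
  assumes g: "orthogonal_transformation g"
  shows "distr lborel borel g = lborel"
proof (rule lborel_eqI[symmetric])
  fix l u :: "real^'m::_"
  assume le: "\<And>b. b \<in> Basis \<Longrightarrow> l \<bullet> b \<le> u \<bullet> b"
  have lin: "linear g"
    using g by (rule orthogonal_transformation_linear)
  have box: "box l u \<in> lmeasurable"
    by simp
  have "g -` box l u = inv g ` box l u"
    using orthogonal_transformation_bij[OF g] by (simp add: bij_vimage_eq_inv_image)
  moreover have "inv g ` box l u \<in> sets borel"
    using measurable_sets[OF borel_measurable_linear[OF lin], of "box l u"] calculation by simp
  ultimately have "emeasure (distr lborel borel g) (box l u) = emeasure lebesgue (inv g ` box l u)"
    using lin by (simp add: emeasure_distr)
  also have "\<dots> = emeasure lebesgue (box l u)"
    using orthogonal_transformation_inv[OF g] box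
    by (simp add: emeasure_eq_measure2 measurable_orthogonal_image measure_orthogonal_image)
  also have "\<dots> = (\<Prod>b\<in>Basis. (u - l) \<bullet> b)"
    using le by (simp add: emeasure_lborel_box_eq)
  finally show "emeasure (distr lborel borel g) (box l u) = (\<Prod>b\<in>Basis. (u - l) \<bullet> b)" .
qed simp

lemma lborel_distr_orthogonal_transformation:
  fixes f :: "real^'n \<Rightarrow> real^'n"
  assumes f: "orthogonal_transformation f"
  shows "distr lborel borel f = lborel"
proof -
  define g where "g = relabel \<circ> f \<circ> unlabel"
  have g: "orthogonal_transformation g"
    using f unfolding g_def orthogonal_transformation_def
    by (auto intro!: linear_compose linear_relabel linear_unlabel)
  have [measurable]: "f \<in> borel_measurable borel" "g \<in> borel_measurable borel"
    using f g by (simp_all add: orthogonal_transformation_linear)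
  have [measurable]: "unlabel \<in> borel_measurable borel"
    by (simp add: linear_unlabel)
  have "distr lborel borel f = distr (distr lborel borel unlabel) borel f"
    by (simp add: lborel_distr_unlabel)
  also have "\<dots> = distr lborel borel (f \<circ> unlabel)"
    by (simp add: distr_distr)
  also have "f \<circ> unlabel = unlabel \<circ> g"
    by (auto simp: g_def)
  also have "distr lborel borel (unlabel \<circ> g) = distr (distr lborel borel g) borel unlabel"
    by (simp add: distr_distr)
  also have "\<dots> = lborel"
    by (simp add: lborel_distr_orthogonal_transformation_wellorder[OF g] lborel_distr_unlabel)
  finally show ?thesis .
qed

section \<open>Solids of revolution\<close>

definition solid_of_revolution :: "'a::real_inner \<Rightarrow> (real \<Rightarrow> real) \<Rightarrow> 'a set" where
  "solid_of_revolution e \<rho> = {z. norm (z - (z \<bullet> e) *\<^sub>R e) \<le> \<rho> (z \<bullet> e)}"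

lemma sets_solid_of_revolution [measurable]:
  fixes e :: "'a::euclidean_space"
  assumes [measurable]: "\<rho> \<in> borel_measurable borel"
  shows "solid_of_revolution e \<rho> \<in> sets borel"
  unfolding solid_of_revolution_def by measurable

lemma vimage_solid_of_revolution:
  assumes f: "orthogonal_transformation f"
  shows "f -` solid_of_revolution (f e) \<rho> = solid_of_revolution e \<rho>"
proof -
  have "f z \<bullet> f e = z \<bullet> e" for z
    using f by (simp add: orthogonal_transformation_def)
  moreover have "f z - (z \<bullet> e) *\<^sub>R f e = f (z - (z \<bullet> e) *\<^sub>R e)" for z
    using orthogonal_transformation_linear[OF f] by (simp add: linear_diff linear_scale)
  ultimately have "f z \<in> solid_of_revolution (f e) \<rho> \<longleftrightarrow> z \<in> solid_of_revolution e \<rho>" for z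
    using orthogonal_transformation_norm[OF f] by (simp add: solid_of_revolution_def)
  then show ?thesis
    by blast
qed

lemma emeasure_solid_of_revolution_axis:
  fixes e :: "real^'n" and i :: 'n
  assumes e: "norm e = 1" and [measurable]: "\<rho> \<in> borel_measurable borel"
  shows "emeasure lborel (solid_of_revolution e \<rho>) =
    emeasure lborel (solid_of_revolution (axis i (1::real)) \<rho>)"
proof -
  have ne: "norm e = norm (axis i (1::real))"
    using e by simp
  obtain f where f: "orthogonal_transformation f" "f e = axis i (1::real)"
    using orthogonal_transformation_exists[OF ne] .
  have [measurable]: "f \<in> borel_measurable borel"
    using f by (simp add: orthogonal_transformation_linear)
  have "emeasure lborel (solid_of_revolution e \<rho>) = emeasure lborel (f -` solid_of_revolution (axis i 1) \<rho>)"
    using vimage_solid_of_revolution[OF f(1), of e \<rho>] f(2) by simp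
  also have "\<dots> = emeasure (distr lborel borel f) (solid_of_revolution (axis i 1) \<rho>)"
    by (simp add: emeasure_distr)
  finally show ?thesis
    unfolding lborel_distr_orthogonal_transformation[OF f(1)] .
qed

lemma emeasure_PiM_lborel_cball:
  assumes A: "finite A" "A \<noteq> {}"
  shows "emeasure (Pi\<^sub>M A (\<lambda>_. lborel)) ({f. sqrt (\<Sum>i\<in>A. (f i)\<^sup>2) \<le> r} \<inter> space (Pi\<^sub>M A (\<lambda>_. lborel)))
    = ennreal (unit_ball_vol (card A) * max 0 r ^ card A)"
proof (cases "r > 0")
  case True
  then show ?thesis
    using emeasure_cball_aux[OF A(1) True] by simp
next
  case False
  interpret product_sigma_finite "\<lambda>_. lborel"
    by standard
  obtain i where i: "i \<in> A"
    using A(2) by blast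
  have "f i = 0" if "sqrt (\<Sum>i\<in>A. (f i)\<^sup>2) \<le> r" for f :: "'a \<Rightarrow> real"
  proof -
    have "sqrt (\<Sum>i\<in>A. (f i)\<^sup>2) \<le> 0"
      using that False by linarith
    then have "(\<Sum>i\<in>A. (f i)\<^sup>2) \<le> 0"
      by simp
    then have "(\<Sum>i\<in>A. (f i)\<^sup>2) = 0"
      by (simp add: order_antisym sum_nonneg)
    then show ?thesis
      using A(1) i by (simp add: sum_nonneg_eq_0_iff)
  qed
  then have sub: "{f. sqrt (\<Sum>i\<in>A. (f i)\<^sup>2) \<le> r} \<inter> space (Pi\<^sub>M A (\<lambda>_. lborel))
      \<subseteq> Pi\<^sub>E A (\<lambda>j. if j = i then {0} else UNIV)"
    by (auto simp: space_PiM PiE_iff)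
  have "emeasure (Pi\<^sub>M A (\<lambda>_. lborel)) (Pi\<^sub>E A (\<lambda>j. if j = i then {0::real} else UNIV))
      = (\<Prod>j\<in>A. emeasure lborel (if j = i then {0::real} else UNIV))"
    using A(1) by (rule emeasure_PiM) simp
  also have "\<dots> = 0"
    using A(1) i by (intro prod_zero) auto
  finally have "emeasure (Pi\<^sub>M A (\<lambda>_. lborel))
      ({f. sqrt (\<Sum>i\<in>A. (f i)\<^sup>2) \<le> r} \<inter> space (Pi\<^sub>M A (\<lambda>_. lborel))) = 0"
    using emeasure_mono[OF sub sets_PiM_I_finite[OF A(1), of _ "\<lambda>_. lborel"]] by simp
  then show ?thesis
    using False A by (simp add: max_def card_gt_0_iff)
qed

lemma norm_sum_Basis_subset:
  fixes f :: "'a::euclidean_space \<Rightarrow> real"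
  assumes A: "A \<subseteq> Basis"
  shows "norm (\<Sum>c\<in>A. f c *\<^sub>R c) = sqrt (\<Sum>c\<in>A. (f c)\<^sup>2)"
proof -
  have "finite A"
    using A finite_Basis finite_subset by blast
  moreover have "pairwise (\<lambda>c d. orthogonal (f c *\<^sub>R c) (f d *\<^sub>R d)) A"
    by (intro pairwise_ortho_scaleR pairwise_subset[OF orthogonal_Basis A])
  ultimately have "(norm (\<Sum>c\<in>A. f c *\<^sub>R c))\<^sup>2 = (\<Sum>c\<in>A. (f c)\<^sup>2)"
    using A by (simp add: norm_sum_Pythagorean subset_iff)
  then show ?thesis
    by (metis norm_ge_zero real_sqrt_unique)
qed

lemma emeasure_lborel_Cavalieri:
  fixes b :: "'a::euclidean_space"
  assumes b: "b \<in> Basis" and [measurable]: "S \<in> sets borel"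
  defines "A \<equiv> Basis - {b}"
  shows "emeasure lborel S = (\<integral>\<^sup>+y. emeasure (Pi\<^sub>M A (\<lambda>_. lborel))
    {x \<in> space (Pi\<^sub>M A (\<lambda>_. lborel)). y *\<^sub>R b + (\<Sum>c\<in>A. x c *\<^sub>R c) \<in> S} \<partial>lborel)"
proof -
  interpret product_sigma_finite "\<lambda>_. lborel"
    by standard
  have A: "finite A" "b \<notin> A" and Basis: "Basis = insert b A"
    using b by (auto simp: A_def)
  define T where "T = {f \<in> space (Pi\<^sub>M (insert b A) (\<lambda>_. lborel)). (\<Sum>c\<in>insert b A. f c *\<^sub>R c) \<in> S}"
  have [measurable]: "T \<in> sets (Pi\<^sub>M (insert b A) (\<lambda>_. lborel))"
    unfolding T_def by measurable
  have "emeasure lborel S = emeasure (Pi\<^sub>M (insert b A) (\<lambda>_. lborel)) T"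
    unfolding lborel_eq[where 'a='a] T_def Basis[symmetric] by (simp add: emeasure_distr Int_def conj_commute)
  also have "\<dots> = (\<integral>\<^sup>+y. \<integral>\<^sup>+x. indicator T (x(b := y)) \<partial>Pi\<^sub>M A (\<lambda>_. lborel) \<partial>lborel)"
    using A by (simp add: product_nn_integral_insert_rev flip: nn_integral_indicator)
  also have "\<dots> = (\<integral>\<^sup>+y. \<integral>\<^sup>+x. indicator {x \<in> space (Pi\<^sub>M A (\<lambda>_. lborel)).
      y *\<^sub>R b + (\<Sum>c\<in>A. x c *\<^sub>R c) \<in> S} x \<partial>Pi\<^sub>M A (\<lambda>_. lborel) \<partial>lborel)"
  proof (intro nn_integral_cong)
    fix y :: real and x :: "'a \<Rightarrow> real"
    assume x: "x \<in> space (Pi\<^sub>M A (\<lambda>_. lborel))"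
    have "(\<Sum>c\<in>insert b A. (x(b := y)) c *\<^sub>R c) = y *\<^sub>R b + (\<Sum>c\<in>A. x c *\<^sub>R c)"
      using A by (simp add: sum.insert) (intro sum.cong; auto)
    moreover have "x(b := y) \<in> space (Pi\<^sub>M (insert b A) (\<lambda>_. lborel))"
      using x by (auto simp: space_PiM PiE_iff extensional_def)
    ultimately show "indicator T (x(b := y)) =
        indicator {x \<in> space (Pi\<^sub>M A (\<lambda>_. lborel)). y *\<^sub>R b + (\<Sum>c\<in>A. x c *\<^sub>R c) \<in> S} x"
      using x by (simp add: T_def indicator_def)
  qed
  also have "\<dots> = (\<integral>\<^sup>+y. emeasure (Pi\<^sub>M A (\<lambda>_. lborel))
      {x \<in> space (Pi\<^sub>M A (\<lambda>_. lborel)). y *\<^sub>R b + (\<Sum>c\<in>A. x c *\<^sub>R c) \<in> S} \<partial>lborel)"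
    using A(1) by (simp add: nn_integral_indicator)
  finally show ?thesis .
qed

lemma emeasure_solid_of_revolution_Basis:
  fixes b :: "'a::euclidean_space"
  assumes b: "b \<in> Basis" and dim: "DIM('a) \<ge> 2" and [measurable]: "\<rho> \<in> borel_measurable borel"
  shows "emeasure lborel (solid_of_revolution b \<rho>) =
    (\<integral>\<^sup>+y. ennreal (unit_ball_vol (DIM('a) - 1) * max 0 (\<rho> y) ^ (DIM('a) - 1)) \<partial>lborel)"
proof -
  define A where "A = Basis - {b}"
  have A: "finite A" "A \<subseteq> Basis" "card A = DIM('a) - 1"
    using b by (auto simp: A_def card_Diff_singleton)
  then have "A \<noteq> {}"
    using dim by auto
  have "y *\<^sub>R b + (\<Sum>c\<in>A. x c *\<^sub>R c) \<in> solid_of_revolution b \<rho> \<longleftrightarrow>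
      sqrt (\<Sum>c\<in>A. (x c)\<^sup>2) \<le> \<rho> y" for x y
  proof -
    have "(\<Sum>c\<in>A. x c *\<^sub>R c) \<bullet> b = 0"
      using b by (simp add: A_def inner_sum_left inner_Basis)
    then show ?thesis
      using b A(2) by (simp add: solid_of_revolution_def inner_add_left norm_sum_Basis_subset)
  qed
  moreover have "{x \<in> space (Pi\<^sub>M A (\<lambda>_. lborel)). sqrt (\<Sum>c\<in>A. (x c)\<^sup>2) \<le> \<rho> y} =
      {x. sqrt (\<Sum>c\<in>A. (x c)\<^sup>2) \<le> \<rho> y} \<inter> space (Pi\<^sub>M A (\<lambda>_. lborel))" for y
    by auto
  ultimately show ?thesis
    using b A \<open>A \<noteq> {}\<close>
    by (simp add: emeasure_lborel_Cavalieri A_def[symmetric] emeasure_PiM_lborel_cball)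
qed

section \<open>The ball hull of two points\<close>

lemma norm_add_scaleR_unit_sq:
  fixes e x :: "'a::real_inner"
  assumes e: "norm e = 1"
  shows "(norm (x + k *\<^sub>R e))\<^sup>2 = (x \<bullet> e + k)\<^sup>2 + (norm (x - (x \<bullet> e) *\<^sub>R e))\<^sup>2"
proof -
  have ee: "e \<bullet> e = 1"
    using e by (simp add: norm_eq_sqrt_inner)
  have eq: "x + k *\<^sub>R e = (x \<bullet> e + k) *\<^sub>R e + (x - (x \<bullet> e) *\<^sub>R e)"
    by (simp add: algebra_simps)
  have "orthogonal ((x \<bullet> e + k) *\<^sub>R e) (x - (x \<bullet> e) *\<^sub>R e)"
    using ee by (simp add: orthogonal_def inner_diff_right inner_commute)
  then have "(norm (x + k *\<^sub>R e))\<^sup>2 = (norm ((x \<bullet> e + k) *\<^sub>R e))\<^sup>2 + (norm (x - (x \<bullet> e) *\<^sub>R e))\<^sup>2"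
    unfolding eq by (rule norm_add_Pythagorean)
  then show ?thesis
    using e by (simp add: power_mult_distrib)
qed

lemma c_dual_translation: "c_dual ((+) m ` A) = (+) m ` c_dual A"
  for m :: "'a::real_normed_vector"
proof -
  have "z \<in> c_dual ((+) m ` A) \<longleftrightarrow> z - m \<in> c_dual A" for z
    by (simp add: c_dual_def dist_norm algebra_simps)
  then show ?thesis
    by (force simp: image_iff)
qed

lemma conv_c_translation: "conv_c ((+) m ` A) = (+) m ` conv_c A"
  for m :: "'a::real_normed_vector"
  by (simp add: conv_c_def c_dual_translation)

lemma mem_conv_c_iff: "z \<in> conv_c A \<longleftrightarrow> (\<forall>c\<in>c_dual A. dist c z \<le> 1)"
  by (simp add: conv_c_def c_dual_def)

lemma conv_c_far:
  assumes "dist a b > 2"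
  shows "conv_c {a, b} = UNIV"
proof -
  have "\<not> (dist a c \<le> 1 \<and> dist b c \<le> 1)" for c
    using assms dist_triangle[of a b c] dist_commute[of b c] by linarith
  then have "c_dual {a, b} = {}"
    by (auto simp: c_dual_def)
  then show ?thesis
    by (simp add: conv_c_def c_dual_def)
qed

lemma norm_diff_unit_sq:
  fixes e x z :: "'a::real_inner"
  assumes e: "norm e = 1"
  shows "(norm (z - x))\<^sup>2 = (z \<bullet> e - x \<bullet> e)\<^sup>2 +
    (norm ((z - (z \<bullet> e) *\<^sub>R e) - (x - (x \<bullet> e) *\<^sub>R e)))\<^sup>2"
  using norm_add_scaleR_unit_sq[OF e, of "z - x" 0]
  by (simp add: inner_diff_left algebra_simps)

(* (s, \<sigma>) are the axial and radial coordinates of a point of the lens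
   c_dual {-k e, k e}, (u, \<rho>) those of a point of the spindle. *)
lemma lens_spindle_sum_le_one:
  fixes s \<sigma> u \<rho> h k :: real
  assumes "0 \<le> s" "0 \<le> \<sigma>" "0 \<le> u" "0 \<le> \<rho>" "0 \<le> h" "0 \<le> k" "h\<^sup>2 + k\<^sup>2 = 1"
    and lens: "(s + k)\<^sup>2 + \<sigma>\<^sup>2 \<le> 1" and spindle: "u\<^sup>2 + (\<rho> + h)\<^sup>2 \<le> 1"
  shows "(s + u)\<^sup>2 + (\<sigma> + \<rho>)\<^sup>2 \<le> 1"
proof -
  have "h\<^sup>2 \<le> (\<rho> + h)\<^sup>2"
    using assms by (intro power_mono) auto
  then have "u\<^sup>2 \<le> k\<^sup>2"
    using spindle assms(7) by linarith
  then have "u \<le> k"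
    using assms(6) by (rule power2_le_imp_le)
  have "k\<^sup>2 \<le> (s + k)\<^sup>2"
    using assms by (intro power_mono) auto
  then have "\<sigma>\<^sup>2 \<le> h\<^sup>2"
    using lens assms(7) by linarith
  then have "\<sigma> \<le> h"
    using assms(5) by (rule power2_le_imp_le)
  have "s * (k - u) \<ge> 0" "\<rho> * (h - \<sigma>) \<ge> 0"
    using \<open>u \<le> k\<close> \<open>\<sigma> \<le> h\<close> assms by simp_all
  then show ?thesis
    using lens spindle assms(7) by (simp add: power2_sum algebra_simps power2_eq_square)
qed

lemma power2_add_and_diff_le_iff:
  fixes \<xi> k p :: real
  assumes "0 \<le> k"
  shows "(\<xi> + k)\<^sup>2 + p \<le> 1 \<and> (\<xi> - k)\<^sup>2 + p \<le> 1 \<longleftrightarrow> (\<bar>\<xi>\<bar> + k)\<^sup>2 + p \<le> 1"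
proof -
  have "(\<xi> + k)\<^sup>2 \<le> (\<bar>\<xi>\<bar> + k)\<^sup>2" "(\<xi> - k)\<^sup>2 \<le> (\<bar>\<xi>\<bar> + k)\<^sup>2"
    using assms by (simp_all add: abs_le_square_iff[symmetric] abs_triangle_ineq abs_triangle_ineq4)
  moreover have "(\<bar>\<xi>\<bar> + k)\<^sup>2 = (\<xi> + k)\<^sup>2 \<or> (\<bar>\<xi>\<bar> + k)\<^sup>2 = (\<xi> - k)\<^sup>2"
    by (cases "0 \<le> \<xi>") (simp_all add: power2_eq_square algebra_simps)
  ultimately show ?thesis
    by linarith
qed

lemma mem_c_dual_symmetric_pair:
  fixes e c :: "'a::real_inner"
  assumes e: "norm e = 1" and k: "0 \<le> k"
  shows "c \<in> c_dual {- (k *\<^sub>R e), k *\<^sub>R e} \<longleftrightarrow>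
    (\<bar>c \<bullet> e\<bar> + k)\<^sup>2 + (norm (c - (c \<bullet> e) *\<^sub>R e))\<^sup>2 \<le> 1"
proof -
  have "dist (- (k *\<^sub>R e)) c = norm (c + k *\<^sub>R e)" "dist (k *\<^sub>R e) c = norm (c + (- k) *\<^sub>R e)"
    by (simp_all add: dist_norm norm_minus_commute algebra_simps)
  then have "c \<in> c_dual {- (k *\<^sub>R e), k *\<^sub>R e} \<longleftrightarrow>
      (norm (c + k *\<^sub>R e))\<^sup>2 \<le> 1 \<and> (norm (c + (- k) *\<^sub>R e))\<^sup>2 \<le> 1"
    by (simp add: c_dual_def power_le_one_iff)
  then show ?thesis
    using power2_add_and_diff_le_iff[OF k] norm_add_scaleR_unit_sq[OF e, of c k]
      norm_add_scaleR_unit_sq[OF e, of c "- k"]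
    by simp
qed

lemma orthogonal_unit_direction_exists:
  fixes e y :: "'a::euclidean_space"
  assumes dim: "DIM('a) \<ge> 2" and y: "y \<bullet> e = 0"
  obtains w where "norm w = 1" "w \<bullet> e = 0" "y = norm y *\<^sub>R w"
proof (cases "y = 0")
  case True
  obtain q where "q \<noteq> 0" "orthogonal e q"
    using orthogonal_to_vector_exists[OF dim] by blast
  then show ?thesis
    by (intro that[of "q /\<^sub>R norm q"]) (auto simp: True orthogonal_def inner_commute)
next
  case False
  then show ?thesis
    using y by (intro that[of "y /\<^sub>R norm y"]) auto
qed

lemma dist_le_one_if_lens_spindle:
  fixes e c z :: "'a::real_inner"
  assumes e: "norm e = 1" and hk: "0 \<le> h" "0 \<le> k" "h\<^sup>2 + k\<^sup>2 = 1"
    and c: "c \<in> c_dual {- (k *\<^sub>R e), k *\<^sub>R e}"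
    and z: "(z \<bullet> e)\<^sup>2 + (norm (z - (z \<bullet> e) *\<^sub>R e) + h)\<^sup>2 \<le> 1"
  shows "dist c z \<le> 1"
proof -
  have lens: "(\<bar>c \<bullet> e\<bar> + k)\<^sup>2 + (norm (c - (c \<bullet> e) *\<^sub>R e))\<^sup>2 \<le> 1"
    using c mem_c_dual_symmetric_pair[OF e hk(2)] by simp
  have "(dist c z)\<^sup>2 = (z \<bullet> e - c \<bullet> e)\<^sup>2 + (norm ((z - (z \<bullet> e) *\<^sub>R e) - (c - (c \<bullet> e) *\<^sub>R e)))\<^sup>2"
    unfolding dist_norm norm_minus_commute[of c z] by (rule norm_diff_unit_sq[OF e])
  also have "\<dots> \<le> (\<bar>c \<bullet> e\<bar> + \<bar>z \<bullet> e\<bar>)\<^sup>2 + (norm (c - (c \<bullet> e) *\<^sub>R e) + norm (z - (z \<bullet> e) *\<^sub>R e))\<^sup>2"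
  proof (rule add_mono)
    show "(z \<bullet> e - c \<bullet> e)\<^sup>2 \<le> (\<bar>c \<bullet> e\<bar> + \<bar>z \<bullet> e\<bar>)\<^sup>2"
      by (simp add: abs_le_square_iff[symmetric] abs_triangle_ineq4 add.commute)
    show "(norm ((z - (z \<bullet> e) *\<^sub>R e) - (c - (c \<bullet> e) *\<^sub>R e)))\<^sup>2 \<le>
        (norm (c - (c \<bullet> e) *\<^sub>R e) + norm (z - (z \<bullet> e) *\<^sub>R e))\<^sup>2"
      using norm_triangle_ineq4[of "z - (z \<bullet> e) *\<^sub>R e" "c - (c \<bullet> e) *\<^sub>R e"]
      by (intro power_mono) simp_all
  qed
  also have "\<dots> \<le> 1"
    using lens z hk by (intro lens_spindle_sum_le_one) simp_all
  finally show ?thesis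
    by (simp add: power_le_one_iff)
qed

lemma spindle_if_mem_conv_c:
  fixes e z :: "'a::euclidean_space"
  assumes e: "norm e = 1" and hk: "0 \<le> h" "0 \<le> k" "h\<^sup>2 + k\<^sup>2 = 1" and dim: "DIM('a) \<ge> 2"
    and z: "z \<in> conv_c {- (k *\<^sub>R e), k *\<^sub>R e}"
  shows "(z \<bullet> e)\<^sup>2 + (norm (z - (z \<bullet> e) *\<^sub>R e) + h)\<^sup>2 \<le> 1"
proof -
  define y where "y = z - (z \<bullet> e) *\<^sub>R e"
  have ye: "y \<bullet> e = 0"
    using e by (simp add: y_def inner_diff_left dot_square_norm)
  obtain w where w: "norm w = 1" "w \<bullet> e = 0" "y = norm y *\<^sub>R w"
    using orthogonal_unit_direction_exists[OF dim ye] .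
  \<comment> \<open>the centre of a unit ball through both points, on the far side of the axis from z\<close>
  define c where "c = - (h *\<^sub>R w)"
  have "c \<in> c_dual {- (k *\<^sub>R e), k *\<^sub>R e}"
    using w hk by (simp add: mem_c_dual_symmetric_pair[OF e hk(2)] c_def abs_mult)
  then have "dist c z \<le> 1"
    using z by (simp add: mem_conv_c_iff)
  have "y + h *\<^sub>R w = (norm y + h) *\<^sub>R w"
    by (simp only: scaleR_add_left flip: w(3))
  then have "z - c = (norm y + h) *\<^sub>R w + (z \<bullet> e) *\<^sub>R e"
    by (simp add: c_def y_def algebra_simps)
  then have dist_sq: "(dist c z)\<^sup>2 = (z \<bullet> e)\<^sup>2 + (norm y + h)\<^sup>2"
    unfolding dist_norm norm_minus_commute[of c z]
    using norm_add_scaleR_unit_sq[OF e, of "(norm y + h) *\<^sub>R w" "z \<bullet> e"] w(1,2) hk(1)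
    by simp
  have "(dist c z)\<^sup>2 \<le> 1"
    using \<open>dist c z \<le> 1\<close> by (simp add: power_le_one)
  then show ?thesis
    by (simp add: dist_sq y_def)
qed

lemma power2_add_power2_le_one_iff_sqrt:
  fixes y s h :: real
  assumes "0 \<le> s" "0 \<le> h"
  shows "y\<^sup>2 + (s + h)\<^sup>2 \<le> 1 \<longleftrightarrow> s \<le> sqrt (1 - y\<^sup>2) - h"
proof (cases "y\<^sup>2 \<le> 1")
  case True
  have "y\<^sup>2 + (s + h)\<^sup>2 \<le> 1 \<longleftrightarrow> (s + h)\<^sup>2 \<le> 1 - y\<^sup>2"
    by linarith
  also have "\<dots> \<longleftrightarrow> s + h \<le> sqrt (1 - y\<^sup>2)"
  proof -
    have "s + h = sqrt ((s + h)\<^sup>2)"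
      using assms by simp
    then show ?thesis
      by (metis real_sqrt_le_iff)
  qed
  finally show ?thesis
    by linarith
next
  case False
  then have "sqrt (1 - y\<^sup>2) < 0"
    by simp
  then have "\<not> y\<^sup>2 + (s + h)\<^sup>2 \<le> 1" "\<not> s \<le> sqrt (1 - y\<^sup>2) - h"
    using False assms zero_le_power2[of "s + h"] by linarith+
  then show ?thesis
    by blast
qed

lemma conv_c_symmetric_pair:
  fixes e :: "'a::euclidean_space"
  assumes e: "norm e = 1" and k: "0 \<le> k" "k \<le> 1" and dim: "DIM('a) \<ge> 2"
  shows "conv_c {- (k *\<^sub>R e), k *\<^sub>R e} =
    solid_of_revolution e (\<lambda>y. sqrt (1 - y\<^sup>2) - sqrt (1 - k\<^sup>2))"
proof -
  define h where "h = sqrt (1 - k\<^sup>2)"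
  have "k\<^sup>2 \<le> 1"
    using k by (simp add: power_le_one)
  then have hk: "0 \<le> h" "0 \<le> k" "h\<^sup>2 + k\<^sup>2 = 1"
    using k by (simp_all add: h_def)
  have "z \<in> conv_c {- (k *\<^sub>R e), k *\<^sub>R e} \<longleftrightarrow>
      (z \<bullet> e)\<^sup>2 + (norm (z - (z \<bullet> e) *\<^sub>R e) + h)\<^sup>2 \<le> 1" for z
  proof
    assume "z \<in> conv_c {- (k *\<^sub>R e), k *\<^sub>R e}"
    then show "(z \<bullet> e)\<^sup>2 + (norm (z - (z \<bullet> e) *\<^sub>R e) + h)\<^sup>2 \<le> 1"
      by (rule spindle_if_mem_conv_c[OF e hk dim])
  next
    assume "(z \<bullet> e)\<^sup>2 + (norm (z - (z \<bullet> e) *\<^sub>R e) + h)\<^sup>2 \<le> 1"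
    then show "z \<in> conv_c {- (k *\<^sub>R e), k *\<^sub>R e}"
      using dist_le_one_if_lens_spindle[OF e hk] by (auto simp: mem_conv_c_iff)
  qed
  then show ?thesis
    using hk(1) by (simp add: solid_of_revolution_def power2_add_power2_le_one_iff_sqrt h_def set_eq_iff)
qed

(* The (m)-volume of the cross-section at height y of the spindle conv_c {a, b} in
   R^(m+1) with D = |a - b|^2. *)
definition spindle_slice :: "nat \<Rightarrow> real \<Rightarrow> real \<Rightarrow> real" where
  "spindle_slice m D y = unit_ball_vol m * max 0 (sqrt (1 - y\<^sup>2) - sqrt (1 - D / 4)) ^ m"

definition spindle_volume :: "nat \<Rightarrow> real \<Rightarrow> ennreal" where
  "spindle_volume m D = (if D \<le> 4 then \<integral>\<^sup>+y. ennreal (spindle_slice m D y) \<partial>lborel else \<infinity>)"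

lemma borel_measurable_spindle_slice [measurable]: "spindle_slice m D \<in> borel_measurable borel"
  unfolding spindle_slice_def by measurable

lemma emeasure_lebesgue_translation:
  fixes m :: "'a::euclidean_space"
  shows "emeasure lebesgue ((+) m ` S) = emeasure lebesgue S"
  using emeasure_lebesgue_affine[of 1 m S] by (simp add: add.commute cong: image_cong_simp)

lemma pair_eq_translated_symmetric_pair:
  fixes a b :: "real^'n"
  obtains e where "norm e = 1"
    and "{a, b} = (+) ((1/2) *\<^sub>R (a + b)) ` {- ((dist a b / 2) *\<^sub>R e), (dist a b / 2) *\<^sub>R e}"
proof -
  obtain i :: 'n where True
    by blast
  define e where "e = (if a = b then axis i 1 else (b - a) /\<^sub>R dist a b)"
  have e: "norm e = 1" and "b = a + dist a b *\<^sub>R e"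
    by (auto simp: e_def dist_norm norm_minus_commute)
  then have "(1/2) *\<^sub>R (a + b) + - ((dist a b / 2) *\<^sub>R e) = a"
      "(1/2) *\<^sub>R (a + b) + (dist a b / 2) *\<^sub>R e = b"
    by (simp_all add: vec_eq_iff field_simps)
  then show ?thesis
    using e by (intro that[of e]) simp_all
qed

lemma emeasure_conv_c_pair:
  fixes a b :: "real^'n"
  assumes dim: "CARD('n) \<ge> 2"
  shows "emeasure lebesgue (conv_c {a, b}) = spindle_volume (CARD('n) - 1) ((dist a b)\<^sup>2)"
proof (cases "dist a b \<le> 2")
  case False
  then have "(2::real)\<^sup>2 < (dist a b)\<^sup>2"
    by (intro power_strict_mono) auto
  then show ?thesis
    using False by (simp add: spindle_volume_def conv_c_far)
next
  case True
  define \<rho> where "\<rho> = (\<lambda>y. sqrt (1 - y\<^sup>2) - sqrt (1 - (dist a b / 2)\<^sup>2))"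
  have [measurable]: "\<rho> \<in> borel_measurable borel"
    unfolding \<rho>_def by measurable
  obtain e where e: "norm e = 1"
    and ab: "{a, b} = (+) ((1/2) *\<^sub>R (a + b)) ` {- ((dist a b / 2) *\<^sub>R e), (dist a b / 2) *\<^sub>R e}"
    by (rule pair_eq_translated_symmetric_pair)
  have "conv_c {- ((dist a b / 2) *\<^sub>R e), (dist a b / 2) *\<^sub>R e} = solid_of_revolution e \<rho>"
    unfolding \<rho>_def using e True dim by (intro conv_c_symmetric_pair) simp_all
  then have "emeasure lebesgue (conv_c {a, b}) = emeasure lebesgue (solid_of_revolution e \<rho>)"
    by (simp only: ab conv_c_translation emeasure_lebesgue_translation)
  also have "\<dots> = emeasure lborel (solid_of_revolution e \<rho>)"
    by simp
  also obtain i :: 'n where "\<dots> = emeasure lborel (solid_of_revolution (axis i (1::real)) \<rho>)"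
    using emeasure_solid_of_revolution_axis[OF e] by simp
  also have "\<dots> = spindle_volume (CARD('n) - 1) ((dist a b)\<^sup>2)"
    using True power_mono[of "dist a b" 2 2] dim emeasure_solid_of_revolution_Basis[of "axis i (1::real)" \<rho>]
    by (simp add: spindle_volume_def spindle_slice_def \<rho>_def power_divide)
  finally show ?thesis .
qed

section \<open>Convexity of the spindle volume\<close>

lemma convex_on_power_nonneg: "convex_on {0::real..} (\<lambda>x. x ^ n)"
proof (cases "even n")
  case True
  then show ?thesis
    by (rule convex_on_subset[OF convex_power_even]) (simp_all add: convex_real_interval)
next
  case False
  then show ?thesis
    by (rule convex_power_odd)
qed

lemma sqrt_concave_combination:
  fixes p q u :: real
  assumes "0 \<le> p" "0 \<le> q" "0 \<le> u" "u \<le> 1"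
  shows "(1 - u) * sqrt p + u * sqrt q \<le> sqrt ((1 - u) * p + u * q)"
proof (rule real_le_rsqrt)
  show "((1 - u) * sqrt p + u * sqrt q)\<^sup>2 \<le> (1 - u) * p + u * q"
    using convex_onD[OF convex_power2, of u "sqrt p" "sqrt q"] assms by simp
qed

lemma max_0_power_convex_combination:
  fixes x p q u :: real
  assumes x: "x \<le> (1 - u) * p + u * q" and u: "0 \<le> u" "u \<le> 1"
  shows "max 0 x ^ m \<le> (1 - u) * max 0 p ^ m + u * max 0 q ^ m"
proof -
  have "(1 - u) * p + u * q \<le> (1 - u) * max 0 p + u * max 0 q"
    using u by (intro add_mono mult_left_mono) auto
  then have "max 0 x \<le> (1 - u) * max 0 p + u * max 0 q"
    using x u by simp
  then have "max 0 x ^ m \<le> ((1 - u) * max 0 p + u * max 0 q) ^ m"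
    by (rule power_mono) simp
  also have "\<dots> \<le> (1 - u) * max 0 p ^ m + u * max 0 q ^ m"
    using convex_onD[OF convex_on_power_nonneg, of u "max 0 p" "max 0 q"] u by simp
  finally show ?thesis .
qed

lemma spindle_slice_convex:
  assumes u: "0 \<le> u" "u \<le> 1" and D: "D1 \<le> 4" "D2 \<le> 4" "D \<le> (1 - u) * D1 + u * D2"
  shows "spindle_slice m D y \<le> (1 - u) * spindle_slice m D1 y + u * spindle_slice m D2 y"
proof -
  have "(1 - u) * sqrt (1 - D1 / 4) + u * sqrt (1 - D2 / 4) \<le>
      sqrt ((1 - u) * (1 - D1 / 4) + u * (1 - D2 / 4))"
    using u D by (intro sqrt_concave_combination) auto
  also have "(1 - u) * (1 - D1 / 4) + u * (1 - D2 / 4) = 1 - ((1 - u) * D1 + u * D2) / 4"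
    by (simp add: field_simps)
  also have "sqrt \<dots> \<le> sqrt (1 - D / 4)"
    using D(3) by simp
  finally have "sqrt (1 - y\<^sup>2) - sqrt (1 - D / 4) \<le>
      (1 - u) * (sqrt (1 - y\<^sup>2) - sqrt (1 - D1 / 4)) + u * (sqrt (1 - y\<^sup>2) - sqrt (1 - D2 / 4))"
    by (simp add: algebra_simps)
  from max_0_power_convex_combination[OF this u, of m]
  have "unit_ball_vol m * max 0 (sqrt (1 - y\<^sup>2) - sqrt (1 - D / 4)) ^ m \<le>
      unit_ball_vol m * ((1 - u) * max 0 (sqrt (1 - y\<^sup>2) - sqrt (1 - D1 / 4)) ^ m +
        u * max 0 (sqrt (1 - y\<^sup>2) - sqrt (1 - D2 / 4)) ^ m)"
    by (rule mult_left_mono) simp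
  then show ?thesis
    by (simp add: spindle_slice_def algebra_simps)
qed

lemma nn_integral_convex_combination_le:
  fixes g g1 g2 :: "'a \<Rightarrow> real"
  assumes g: "\<And>y. g y \<le> (1 - u) * g1 y + u * g2 y" and "\<And>y. 0 \<le> g1 y" "\<And>y. 0 \<le> g2 y"
    and u: "0 \<le> u" "u \<le> 1"
    and [measurable]: "g1 \<in> borel_measurable M" "g2 \<in> borel_measurable M"
  shows "(\<integral>\<^sup>+y. ennreal (g y) \<partial>M) \<le>
    ennreal (1 - u) * (\<integral>\<^sup>+y. ennreal (g1 y) \<partial>M) + ennreal u * (\<integral>\<^sup>+y. ennreal (g2 y) \<partial>M)"
proof -
  have "ennreal (g y) \<le> ennreal (1 - u) * ennreal (g1 y) + ennreal u * ennreal (g2 y)" for y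
    using g[of y] assms(2,3)[of y] u by (simp add: ennreal_leI flip: ennreal_plus ennreal_mult)
  then have "(\<integral>\<^sup>+y. ennreal (g y) \<partial>M) \<le>
      (\<integral>\<^sup>+y. ennreal (1 - u) * ennreal (g1 y) + ennreal u * ennreal (g2 y) \<partial>M)"
    by (rule nn_integral_mono)
  also have "\<dots> = ennreal (1 - u) * (\<integral>\<^sup>+y. ennreal (g1 y) \<partial>M) + ennreal u * (\<integral>\<^sup>+y. ennreal (g2 y) \<partial>M)"
    by (simp add: nn_integral_add nn_integral_cmult)
  finally show ?thesis .
qed

lemma spindle_volume_mono:
  assumes "D \<le> D'"
  shows "spindle_volume m D \<le> spindle_volume m D'"
proof (cases "D' \<le> 4")
  case True
  then have "spindle_slice m D y \<le> spindle_slice m D' y" for y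
    using spindle_slice_convex[of 0 D' D' D] assms by simp
  then show ?thesis
    using True assms by (simp add: spindle_volume_def nn_integral_mono ennreal_leI)
qed (simp add: spindle_volume_def)

lemma spindle_volume_convex:
  assumes u: "0 \<le> u" "u \<le> 1" and D: "D \<le> (1 - u) * D1 + u * D2"
  shows "spindle_volume m D \<le> ennreal (1 - u) * spindle_volume m D1 + ennreal u * spindle_volume m D2"
proof -
  consider "D1 \<le> 4" "D2 \<le> 4" | "u = 0" | "u = 1" | "\<not> (D1 \<le> 4 \<and> D2 \<le> 4)" "0 < u" "u < 1"
    using u by linarith
  then show ?thesis
  proof cases
    case 1
    then have "(1 - u) * D1 + u * D2 \<le> (1 - u) * 4 + u * 4"
      using u by (intro add_mono mult_left_mono) auto
    then have "D \<le> 4"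
      using D by simp
    then show ?thesis
      using 1 u spindle_slice_convex[OF u 1 D]
      by (simp add: spindle_volume_def nn_integral_convex_combination_le spindle_slice_def)
  next
    case 2
    then show ?thesis
      using D spindle_volume_mono[of D D1 m] by simp
  next
    case 3
    then show ?thesis
      using D spindle_volume_mono[of D D2 m] by simp
  next
    case 4
    then show ?thesis
      by (auto simp: spindle_volume_def ennreal_mult_top)
  qed
qed

lemma norm_sq_convex_combination:
  fixes p q :: "'a::real_normed_vector"
  assumes u: "0 \<le> u" "u \<le> 1"
  shows "(norm ((1 - u) *\<^sub>R p + u *\<^sub>R q))\<^sup>2 \<le> (1 - u) * (norm p)\<^sup>2 + u * (norm q)\<^sup>2"
proof -
  have "norm ((1 - u) *\<^sub>R p + u *\<^sub>R q) \<le> (1 - u) * norm p + u * norm q"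
    using u norm_triangle_ineq[of "(1 - u) *\<^sub>R p" "u *\<^sub>R q"] by simp
  then have "(norm ((1 - u) *\<^sub>R p + u *\<^sub>R q))\<^sup>2 \<le> ((1 - u) * norm p + u * norm q)\<^sup>2"
    by (rule power_mono) simp
  also have "\<dots> \<le> (1 - u) * (norm p)\<^sup>2 + u * (norm q)\<^sup>2"
    using convex_onD[OF convex_power2, of u "norm p" "norm q"] u by simp
  finally show ?thesis .
qed

theorem corollary3p3:
  fixes v x0 y0 :: "real ^ 'n" and \<alpha> \<beta> :: real
  assumes "CARD('n) \<ge> 2"
    and "norm v = 1"
  defines "L \<equiv> (\<lambda>t::real. conv_c {x0 + (t * \<alpha>) *\<^sub>R v, y0 + (t * \<beta>) *\<^sub>R v})"
  defines "f \<equiv> (\<lambda>t::real. emeasure lebesgue (L t))"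
  shows "\<forall>s t u::real. 0 \<le> u \<and> u \<le> 1 \<longrightarrow>
           f ((1 - u) * s + u * t) \<le> ennreal (1 - u) * f s + ennreal u * f t"
proof (intro allI impI)
  fix s t u :: real
  assume u: "0 \<le> u \<and> u \<le> 1"
  define D where "D \<tau> = (norm ((y0 - x0) + (\<tau> * (\<beta> - \<alpha>)) *\<^sub>R v))\<^sup>2" for \<tau>
  have f: "f \<tau> = spindle_volume (CARD('n) - 1) (D \<tau>)" for \<tau>
    using emeasure_conv_c_pair[OF assms(1)]
    by (simp add: f_def L_def D_def dist_norm norm_minus_commute algebra_simps)
  have "(y0 - x0) + (((1 - u) * s + u * t) * (\<beta> - \<alpha>)) *\<^sub>R v =
      (1 - u) *\<^sub>R ((y0 - x0) + (s * (\<beta> - \<alpha>)) *\<^sub>R v) + u *\<^sub>R ((y0 - x0) + (t * (\<beta> - \<alpha>)) *\<^sub>R v)"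
    by (simp add: algebra_simps)
  then have "D ((1 - u) * s + u * t) \<le> (1 - u) * D s + u * D t"
    unfolding D_def using norm_sq_convex_combination u by metis
  then show "f ((1 - u) * s + u * t) \<le> ennreal (1 - u) * f s + ennreal u * f t"
    unfolding f using u by (intro spindle_volume_convex) auto
qed

end
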